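(* Let $\lambda>0$, let $E_1,E_2,\ldots$ be i.i.d. $\text{Exp}(\lambda)$ random variables, and let $$X=\prod_{i=1}^{\infty}\min\left\{\sum_{k=1}^iE_k,1\right\}.$$ Then for every $\alpha\in(0,1)$ and all $t>0$, $$\mathbb{P}(X\le t)\le e^{\frac{\alpha\lambda}{1-\alpha}}\,t^{\alpha}.$$ Moreover, for all $t\in(0,1]$, $$\mathbb{P}(X\le t)\le \exp\left\{-\left(\sqrt{-\log t}-\sqrt{\lambda}\right)_+^2\right\},$$ where $x_+=\max\{x,0\}$.
   Context: $\text{Exp}(\lambda)$ denotes the exponential distribution with rate $\lambda$ (mean $1/\lambda$). *)

theory Defs
  imports "HOL-Probability.Probability"
begin

definition infprod_lim :: "(nat \<Rightarrow> real) \<Rightarrow> real" where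
  "infprod_lim f = lim (\<lambda>n. \<Prod>i<n. f i)"

end

theory Submission
  imports Defs
begin

(* Fix a in (0,1) and write S_n = E_0 + ... + E_(n-1). The function G = moment_bound l a, i.e.
     G s = exp (l ((1 - s^(1-a)) / (1-a) - 1 + s))  for s < 1,     G s = 1  for s >= 1,
   solves G' = l G (1 - s^(-a)) on (0,1) with G 1 = 1, which is exactly what makes
     E [min (s + E) 1 ^ (-a) * G (s + E)] <= G s      for E ~ Exp(l) and s >= 0.
   By independence, prod_(i<n) min S_(i+1) 1 ^ (-a) * G S_n then has expectation at most
   G 0 = exp (a l / (1-a)), and since G >= 1, Markov's inequality gives
   P (prod_(i<n) min S_(i+1) 1 <= t) <= G 0 * t^a. The partial products converge to X, so the
   bound passes to X; choosing a = 1 - sqrt (l / - ln t) yields the second estimate. *)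

definition moment_bound :: "real \<Rightarrow> real \<Rightarrow> real \<Rightarrow> real" where
  "moment_bound l a u = (if 1 \<le> u then 1 else exp (l * ((1 - u powr (1 - a)) / (1 - a) - 1 + u)))"

lemma moment_bound_measurable [measurable]: "moment_bound l a \<in> borel_measurable borel"
  unfolding moment_bound_def by measurable

lemma moment_bound_pos: "0 < moment_bound l a u"
  by (simp add: moment_bound_def)

lemma moment_bound_0: "a < 1 \<Longrightarrow> moment_bound l a 0 = exp (a * l / (1 - a))"
  by (simp add: moment_bound_def field_simps)

lemma one_le_moment_bound:
  assumes "0 \<le> l" "0 < a" "a < 1" "0 \<le> u"
  shows "1 \<le> moment_bound l a u"
proof (cases "1 \<le> u")
  case False
  have "u powr (1 - a) \<le> (1 - a) * u + a"
    using Youngs_inequality_0[of "1 - a" a u 1] assms by (cases "u = 0") auto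
  then have "0 \<le> (1 - u powr (1 - a)) / (1 - a) - 1 + u"
    using assms by (simp add: field_simps)
  then show ?thesis
    using False assms by (simp add: moment_bound_def)
qed (simp add: moment_bound_def)

lemma exp_le_moment_bound:
  assumes "0 \<le> l" "a < 1" "0 \<le> s" "s < 1"
  shows "exp (- l * (1 - s)) \<le> moment_bound l a s"
proof -
  have "s powr (1 - a) \<le> 1"
    using assms by (intro powr_le1) auto
  then have "0 \<le> l * ((1 - s powr (1 - a)) / (1 - a))"
    using assms by simp
  then show ?thesis
    using assms by (simp add: moment_bound_def algebra_simps)
qed

lemma nn_integral_exponential_tail:
  assumes "0 < l"
  shows "(\<integral>\<^sup>+u. ennreal (l * exp (- l * (u - s))) * indicator {b..} u \<partial>lborel)
           = ennreal (exp (- l * (b - s)))"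
proof -
  have "(\<integral>\<^sup>+u. ennreal (l * exp (- l * (u - s))) * indicator {b..} u \<partial>lborel)
      = ennreal (0 - (- exp (- l * (b - s))))"
  proof (rule nn_integral_FTC_atLeast)
    show "DERIV (\<lambda>u. - exp (- l * (u - s))) x :> l * exp (- l * (x - s))" for x
      by (auto intro!: derivative_eq_intros)
    show "((\<lambda>u. - exp (- l * (u - s))) \<longlongrightarrow> 0) at_top"
      using assms by real_asymp
  qed (use assms in auto)
  then show ?thesis by simp
qed

lemma moment_bound_has_integral:
  assumes "0 < a" "a < 1" "0 \<le> s" "s \<le> 1"
  shows "((\<lambda>u. l * exp (- l * (u - s)) * (min u 1 powr (- a) * moment_bound l a u))
           has_integral (moment_bound l a s - exp (- l * (1 - s)))) {s..1}"
proof -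
  define k where "k u = l * ((1 - u powr (1 - a)) / (1 - a) - 1 + u)" for u
  define F where "F u = - exp (- l * (u - s)) * exp (k u)" for u
  have k1: "k 1 = 0" by (simp add: k_def)
  have "((\<lambda>u. l * exp (- l * (u - s)) * (u powr (- a) * exp (k u))) has_integral (F 1 - F s)) {s..1}"
  proof (rule fundamental_theorem_of_calculus_interior)
    show "continuous_on {s..1} F"
      unfolding F_def k_def using assms
      by (intro continuous_intros continuous_on_powr') auto
    show "(F has_vector_derivative l * exp (- l * (x - s)) * (x powr (- a) * exp (k x))) (at x)"
      if "x \<in> {s<..<1}" for x
    proof -
      have "0 < x" using that assms by auto
      have "((\<lambda>u. u powr (1 - a)) has_real_derivative (1 - a) * x powr (- a)) (at x)"
        using has_real_derivative_powr[OF \<open>0 < x\<close>, of "1 - a"] by simp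
      then have "(k has_real_derivative l * ((0 - (1 - a) * x powr (- a)) / (1 - a) - 0 + 1)) (at x)"
        unfolding k_def by (intro DERIV_cmult DERIV_add DERIV_diff DERIV_cdivide DERIV_const DERIV_ident)
      then have "(k has_real_derivative l * (1 - x powr (- a))) (at x)"
        using assms by simp
      then have "(F has_real_derivative l * exp (- l * (x - s)) * (x powr (- a) * exp (k x))) (at x)"
        unfolding F_def
        by (auto intro!: derivative_eq_intros simp: algebra_simps exp_add[symmetric])
      then show ?thesis
        by (simp add: has_real_derivative_iff_has_vector_derivative)
    qed
  qed (use assms in auto)
  moreover have "F 1 - F s = moment_bound l a s - exp (- l * (1 - s))"
    using assms k1 by (auto simp: F_def moment_bound_def k_def)
  ultimately have "((\<lambda>u. l * exp (- l * (u - s)) * (u powr (- a) * exp (k u)))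
      has_integral (moment_bound l a s - exp (- l * (1 - s)))) {s..1}"
    by simp
  then show ?thesis
    by (rule has_integral_eq[rotated]) (use k1 in \<open>auto simp: moment_bound_def k_def\<close>)
qed

lemma nn_integral_exponential_moment_bound_le:
  assumes "0 < l" "0 < a" "a < 1" "0 \<le> s"
  shows "(\<integral>\<^sup>+x. ennreal (exponential_density l x)
            * ennreal (min (s + x) 1 powr (- a) * moment_bound l a (s + x)) \<partial>lborel)
         \<le> ennreal (moment_bound l a s)"
proof -
  define \<phi> where "\<phi> u = l * exp (- l * (u - s)) * (min u 1 powr (- a) * moment_bound l a u)" for u
  have [measurable]: "\<phi> \<in> borel_measurable borel"
    unfolding \<phi>_def by measurable
  have \<phi>_nonneg: "0 \<le> \<phi> u" for u
    using assms moment_bound_pos[of l a u] by (simp add: \<phi>_def)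
  have tail: "(\<integral>\<^sup>+u. ennreal (\<phi> u) * indicator {b..} u \<partial>lborel) = ennreal (exp (- l * (b - s)))"
    if "1 \<le> b" for b
  proof -
    have "(\<integral>\<^sup>+u. ennreal (\<phi> u) * indicator {b..} u \<partial>lborel)
        = (\<integral>\<^sup>+u. ennreal (l * exp (- l * (u - s))) * indicator {b..} u \<partial>lborel)"
      using that by (intro nn_integral_cong) (auto simp: \<phi>_def moment_bound_def indicator_def)
    then show ?thesis
      using nn_integral_exponential_tail[OF \<open>0 < l\<close>] by simp
  qed
  have "(\<integral>\<^sup>+x. ennreal (exponential_density l x)
            * ennreal (min (s + x) 1 powr (- a) * moment_bound l a (s + x)) \<partial>lborel)
      = (\<integral>\<^sup>+x. ennreal (\<phi> (s + 1 * x)) * indicator {s..} (s + 1 * x) \<partial>lborel)"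
    using assms less_imp_le[OF moment_bound_pos, of l a]
    by (intro nn_integral_cong)
       (auto simp: \<phi>_def exponential_density_def indicator_def ennreal_mult[symmetric] ac_simps)
  also have "\<dots> = (\<integral>\<^sup>+u. ennreal (\<phi> u) * indicator {s..} u \<partial>lborel)"
    using nn_integral_real_affine[of "\<lambda>u. ennreal (\<phi> u) * indicator {s..} u" 1 s] by simp
  also have "\<dots> \<le> ennreal (moment_bound l a s)"
  proof (cases "s < 1")
    case True
    have "(\<integral>\<^sup>+u. ennreal (\<phi> u) * indicator {s..} u \<partial>lborel)
        \<le> (\<integral>\<^sup>+u. ennreal (\<phi> u) * indicator {s..1} u + ennreal (\<phi> u) * indicator {1..} u \<partial>lborel)"
      by (intro nn_integral_mono) (auto simp: indicator_def)
    also have "\<dots> = (\<integral>\<^sup>+u. ennreal (\<phi> u) * indicator {s..1} u \<partial>lborel)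
                   + (\<integral>\<^sup>+u. ennreal (\<phi> u) * indicator {1..} u \<partial>lborel)"
      by (rule nn_integral_add) auto
    also have "\<dots> = ennreal (moment_bound l a s - exp (- l * (1 - s))) + ennreal (exp (- l * (1 - s)))"
    proof -
      have "(\<phi> has_integral (moment_bound l a s - exp (- l * (1 - s)))) {s..1}"
        unfolding \<phi>_def using assms True by (intro moment_bound_has_integral) auto
      then show ?thesis
        using nn_integral_has_integral_lebesgue'[OF \<phi>_nonneg] tail[OF order_refl] by simp
    qed
    also have "\<dots> = ennreal (moment_bound l a s)"
      using exp_le_moment_bound[of l a s] assms True by (subst ennreal_plus[symmetric]) auto
    finally show ?thesis .
  next
    case False
    then show ?thesis
      using tail[of s] by (simp add: moment_bound_def)
  qed
  finally show ?thesis .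
qed

lemma (in prob_space) nn_integral_indep_vars_last:
  fixes X :: "nat \<Rightarrow> 'a \<Rightarrow> real" and g :: "(nat \<Rightarrow> real) \<Rightarrow> real \<Rightarrow> ennreal"
  assumes indep: "indep_vars (\<lambda>_. borel) X UNIV"
    and dist: "distributed M lborel (X n) f"
    and g: "case_prod g \<in> borel_measurable (PiM {..<n} (\<lambda>_. borel) \<Otimes>\<^sub>M borel)"
  shows "(\<integral>\<^sup>+\<omega>. g (restrict (\<lambda>i. X i \<omega>) {..<n}) (X n \<omega>) \<partial>M)
       = (\<integral>\<^sup>+\<omega>. \<integral>\<^sup>+x. f x * g (restrict (\<lambda>i. X i \<omega>) {..<n}) x \<partial>lborel \<partial>M)"
proof -
  define A where "A = PiM {..<n} (\<lambda>_. borel :: real measure)"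
  define B where "B = PiM {n} (\<lambda>_. borel :: real measure)"
  define V where "V \<omega> = restrict (\<lambda>i. X i \<omega>) {..<n}" for \<omega>
  define U where "U \<omega> = restrict (\<lambda>i. X i \<omega>) {n}" for \<omega>
  have U_n: "U \<omega> n = X n \<omega>" for \<omega>
    by (simp add: U_def)
  have [measurable]: "X i \<in> borel_measurable M" for i
    using indep by (auto simp: indep_vars_def)
  have [measurable]: "V \<in> measurable M A"
    unfolding V_def A_def by measurable
  have [measurable]: "U \<in> measurable M B"
    unfolding U_def B_def by measurable
  have [measurable]: "(\<lambda>u. u n) \<in> borel_measurable B"
    unfolding B_def by measurable
  have gA [measurable]: "case_prod g \<in> borel_measurable (A \<Otimes>\<^sub>M borel)"
    using g by (simp add: A_def)
  have [measurable]: "f \<in> borel_measurable borel"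
    using distributed_borel_measurable[OF dist] by simp
  \<comment> \<open>\<open>indep_var\<close> wants both variables of the same type, so \<open>X n\<close> is taken as a function on \<open>{n}\<close>.\<close>
  have ind: "indep_var A V B U"
    unfolding A_def B_def V_def U_def by (rule indep_var_restrict[OF indep]) auto
  have sf: "sigma_finite_measure (distr M B U)"
    by (intro prob_space_imp_sigma_finite prob_space_distr) simp
  have inner: "(\<integral>\<^sup>+u. g v (u n) \<partial>distr M B U) = (\<integral>\<^sup>+x. f x * g v x \<partial>lborel)"
    if v: "v \<in> space A" for v
  proof -
    have gv [measurable]: "g v \<in> borel_measurable borel"
      using measurable_Pair2[OF gA v] by simp
    have "(\<integral>\<^sup>+u. g v (u n) \<partial>distr M B U) = (\<integral>\<^sup>+\<omega>. g v (X n \<omega>) \<partial>M)"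
      by (subst nn_integral_distr) (auto simp: U_n)
    also have "\<dots> = (\<integral>\<^sup>+x. f x * g v x \<partial>lborel)"
      by (rule distributed_nn_integral[OF dist, symmetric]) (use gv in simp)
    finally show ?thesis .
  qed
  define h where "h z = g (fst z) (snd z n)" for z
  have [measurable]: "h \<in> borel_measurable (A \<Otimes>\<^sub>M B)"
    unfolding h_def by measurable
  have "(\<integral>\<^sup>+\<omega>. g (V \<omega>) (X n \<omega>) \<partial>M) = (\<integral>\<^sup>+z. h z \<partial>distr M (A \<Otimes>\<^sub>M B) (\<lambda>\<omega>. (V \<omega>, U \<omega>)))"
    by (subst nn_integral_distr) (auto simp: h_def U_n)
  also have "\<dots> = (\<integral>\<^sup>+z. h z \<partial>(distr M A V \<Otimes>\<^sub>M distr M B U))"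
    using ind by (simp add: indep_var_distribution_eq)
  also have "\<dots> = (\<integral>\<^sup>+v. \<integral>\<^sup>+u. h (v, u) \<partial>distr M B U \<partial>distr M A V)"
    by (rule sigma_finite_measure.nn_integral_fst[OF sf, symmetric]) simp
  also have "\<dots> = (\<integral>\<^sup>+v. \<integral>\<^sup>+x. f x * g v x \<partial>lborel \<partial>distr M A V)"
    by (intro nn_integral_cong) (simp add: h_def inner)
  also have "\<dots> = (\<integral>\<^sup>+\<omega>. \<integral>\<^sup>+x. f x * g (V \<omega>) x \<partial>lborel \<partial>M)"
    by (rule nn_integral_distr) auto
  finally show ?thesis
    unfolding V_def .
qed

lemma (in prob_space) AE_exponential_pos:
  fixes E :: "nat \<Rightarrow> 'a \<Rightarrow> real"
  assumes "0 < l" and "\<And>i. distributed M lborel (E i) (exponential_density l)"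
  shows "AE \<omega> in M. \<forall>i. 0 < E i \<omega>"
proof -
  have "AE \<omega> in M. 0 < E i \<omega>" for i
  proof -
    have "\<P>(\<omega> in M. 0 < E i \<omega>) = 1"
      using exponential_distributedD_gt[OF assms(2) order_refl assms(1)] by simp
    from AE_prob_1[OF this] show ?thesis
      by eventually_elim auto
  qed
  then show ?thesis
    by (simp add: AE_all_countable)
qed

lemma (in prob_space) nn_integral_partial_prod_moment_le:
  fixes E :: "nat \<Rightarrow> 'a \<Rightarrow> real"
  assumes l: "0 < l" and a: "0 < a" "a < 1"
    and indep: "indep_vars (\<lambda>_. borel) E UNIV"
    and dist: "\<And>i. distributed M lborel (E i) (exponential_density l)"
  shows "(\<integral>\<^sup>+\<omega>. ennreal ((\<Prod>i<n. min (\<Sum>k\<le>i. E k \<omega>) 1 powr (- a))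
            * moment_bound l a (\<Sum>k<n. E k \<omega>)) \<partial>M) \<le> ennreal (moment_bound l a 0)"
proof (induction n)
  case 0
  then show ?case by (simp add: emeasure_space_1)
next
  case (Suc n)
  have [measurable]: "E i \<in> borel_measurable M" for i
    using distributed_measurable[OF dist] by simp
  define P where "P v = (\<Prod>i<n. min (\<Sum>k\<le>i. v k) 1 powr (- a))" for v :: "nat \<Rightarrow> real"
  define S where "S v = (\<Sum>k<n. v k)" for v :: "nat \<Rightarrow> real"
  define V where "V \<omega> = restrict (\<lambda>i. E i \<omega>) {..<n}" for \<omega>
  define g where "g v x = ennreal (P v) * ennreal (min (S v + x) 1 powr (- a) * moment_bound l a (S v + x))"
    for v x
  have P_nonneg: "0 \<le> P v" for v
    unfolding P_def by (auto intro!: prod_nonneg)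
  have PV: "P (V \<omega>) = (\<Prod>i<n. min (\<Sum>k\<le>i. E k \<omega>) 1 powr (- a))" for \<omega>
    unfolding P_def V_def by (auto intro!: prod.cong sum.cong)
  have SV: "S (V \<omega>) = (\<Sum>k<n. E k \<omega>)" for \<omega>
    unfolding S_def V_def by (auto intro!: sum.cong)
  have "case_prod g \<in> borel_measurable (PiM {..<n} (\<lambda>_. borel) \<Otimes>\<^sub>M borel)"
    unfolding g_def P_def S_def by measurable
  note indep_step = nn_integral_indep_vars_last[OF indep dist this]
  have S_nonneg: "AE \<omega> in M. 0 \<le> S (V \<omega>)"
    using AE_exponential_pos[OF l dist]
    by eventually_elim (auto simp: SV intro!: sum_nonneg intro: less_imp_le)
  have "(\<integral>\<^sup>+\<omega>. ennreal ((\<Prod>i<Suc n. min (\<Sum>k\<le>i. E k \<omega>) 1 powr (- a))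
            * moment_bound l a (\<Sum>k<Suc n. E k \<omega>)) \<partial>M) = (\<integral>\<^sup>+\<omega>. g (V \<omega>) (E n \<omega>) \<partial>M)"
  proof (intro nn_integral_cong)
    fix \<omega>
    have sum_Suc: "(\<Sum>k<Suc n. E k \<omega>) = S (V \<omega>) + E n \<omega>"
      by (simp only: sum.lessThan_Suc SV)
    have prod_Suc: "(\<Prod>i<Suc n. min (\<Sum>k\<le>i. E k \<omega>) 1 powr (- a))
        = P (V \<omega>) * min (S (V \<omega>) + E n \<omega>) 1 powr (- a)"
      unfolding prod.lessThan_Suc PV sum_Suc[unfolded lessThan_Suc_atMost] ..
    show "ennreal ((\<Prod>i<Suc n. min (\<Sum>k\<le>i. E k \<omega>) 1 powr (- a))
        * moment_bound l a (\<Sum>k<Suc n. E k \<omega>)) = g (V \<omega>) (E n \<omega>)"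
      unfolding prod_Suc sum_Suc g_def using P_nonneg[of "V \<omega>"] less_imp_le[OF moment_bound_pos]
      by (simp add: ennreal_mult[symmetric] mult.assoc)
  qed
  also have "\<dots> = (\<integral>\<^sup>+\<omega>. ennreal (P (V \<omega>)) * \<integral>\<^sup>+x. ennreal (exponential_density l x)
      * ennreal (min (S (V \<omega>) + x) 1 powr (- a) * moment_bound l a (S (V \<omega>) + x)) \<partial>lborel \<partial>M)"
    unfolding V_def indep_step
    by (intro nn_integral_cong) (simp add: g_def nn_integral_cmult[symmetric] ac_simps)
  also have "\<dots> \<le> (\<integral>\<^sup>+\<omega>. ennreal (P (V \<omega>)) * ennreal (moment_bound l a (S (V \<omega>))) \<partial>M)"
    using S_nonneg
    by (intro nn_integral_mono_AE, eventually_elim)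
       (intro mult_left_mono nn_integral_exponential_moment_bound_le l a; simp)
  also have "\<dots> = (\<integral>\<^sup>+\<omega>. ennreal (P (V \<omega>) * moment_bound l a (S (V \<omega>))) \<partial>M)"
    using P_nonneg less_imp_le[OF moment_bound_pos] by (simp add: ennreal_mult)
  also have "\<dots> \<le> ennreal (moment_bound l a 0)"
    unfolding PV SV by (rule Suc.IH)
  finally show ?case .
qed

lemma one_le_powr_mul_moment_weight:
  fixes e :: "nat \<Rightarrow> real"
  assumes "0 \<le> l" "0 < a" "a < 1" "0 < t" "\<And>k. 0 < e k"
    and "(\<Prod>i<n. min (\<Sum>k\<le>i. e k) 1) \<le> t"
  shows "1 \<le> t powr a * ((\<Prod>i<n. min (\<Sum>k\<le>i. e k) 1 powr (- a)) * moment_bound l a (\<Sum>k<n. e k))"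
proof -
  define p where "p = (\<Prod>i<n. min (\<Sum>k\<le>i. e k) 1)"
  have "0 < p"
    unfolding p_def using assms by (intro prod_pos) (auto intro!: sum_pos)
  have "1 \<le> (t / p) powr a"
    using \<open>0 < p\<close> assms by (intro ge_one_powr_ge_zero) (auto simp: p_def)
  also have "\<dots> = t powr a * p powr (- a)"
    using \<open>0 < p\<close> assms by (simp add: powr_divide powr_minus_divide)
  also have "p powr (- a) = (\<Prod>i<n. min (\<Sum>k\<le>i. e k) 1 powr (- a))"
    unfolding p_def using assms by (simp add: prod_powr_distrib less_imp_le sum_nonneg)
  also have "\<dots> \<le> (\<Prod>i<n. min (\<Sum>k\<le>i. e k) 1 powr (- a)) * moment_bound l a (\<Sum>k<n. e k)"
  proof -
    have "1 \<le> moment_bound l a (\<Sum>k<n. e k)"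
      using assms by (intro one_le_moment_bound sum_nonneg) (auto intro: less_imp_le)
    then show ?thesis
      using mult_left_mono[of 1 _ "\<Prod>i<n. min (\<Sum>k\<le>i. e k) 1 powr (- a)"] by (simp add: prod_nonneg)
  qed
  finally show ?thesis
    using assms by (simp add: mult_left_mono)
qed

lemma (in prob_space) measure_partial_prod_le:
  fixes E :: "nat \<Rightarrow> 'a \<Rightarrow> real"
  assumes l: "0 < l" and a: "0 < a" "a < 1"
    and indep: "indep_vars (\<lambda>_. borel) E UNIV"
    and dist: "\<And>i. distributed M lborel (E i) (exponential_density l)"
    and t: "0 < t"
  shows "measure M {\<omega> \<in> space M. (\<Prod>i<n. min (\<Sum>k\<le>i. E k \<omega>) 1) \<le> t}
           \<le> moment_bound l a 0 * t powr a"
proof -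
  have [measurable]: "E i \<in> borel_measurable M" for i
    using distributed_measurable[OF dist] by simp
  define B where "B = {\<omega> \<in> space M. (\<Prod>i<n. min (\<Sum>k\<le>i. E k \<omega>) 1) \<le> t}"
  define Q where "Q \<omega> = (\<Prod>i<n. min (\<Sum>k\<le>i. E k \<omega>) 1 powr (- a)) * moment_bound l a (\<Sum>k<n. E k \<omega>)"
    for \<omega>
  have [measurable]: "B \<in> sets M"
    unfolding B_def by measurable
  have Q_nonneg: "0 \<le> Q \<omega>" for \<omega>
    using less_imp_le[OF moment_bound_pos] by (simp add: Q_def prod_nonneg)
  have "AE \<omega> in M. indicator B \<omega> \<le> ennreal (t powr a * Q \<omega>)"
    using AE_exponential_pos[of l E, OF l dist]
  proof eventually_elim
    case (elim \<omega>)
    then show ?case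
      using one_le_powr_mul_moment_weight[of l a t "\<lambda>k. E k \<omega>" n] l a t
      by (auto simp: indicator_def B_def Q_def ennreal_leI)
  qed
  then have "(\<integral>\<^sup>+\<omega>. indicator B \<omega> \<partial>M) \<le> (\<integral>\<^sup>+\<omega>. ennreal (t powr a * Q \<omega>) \<partial>M)"
    by (rule nn_integral_mono_AE)
  then have "emeasure M B \<le> (\<integral>\<^sup>+\<omega>. ennreal (t powr a * Q \<omega>) \<partial>M)"
    by simp
  also have "\<dots> = (\<integral>\<^sup>+\<omega>. ennreal (t powr a) * ennreal (Q \<omega>) \<partial>M)"
    using Q_nonneg by (simp add: ennreal_mult)
  also have "\<dots> = ennreal (t powr a) * (\<integral>\<^sup>+\<omega>. ennreal (Q \<omega>) \<partial>M)"
    by (rule nn_integral_cmult) (unfold Q_def, measurable)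
  also have "\<dots> \<le> ennreal (t powr a) * ennreal (moment_bound l a 0)"
    unfolding Q_def by (intro mult_left_mono nn_integral_partial_prod_moment_le l a indep dist) simp
  finally show ?thesis
    using less_imp_le[OF moment_bound_pos]
    by (simp add: B_def emeasure_eq_measure ennreal_mult[symmetric] mult.commute)
qed

lemma (in prob_space) measure_le_of_AE_tendsto_less:
  fixes p :: "nat \<Rightarrow> 'a \<Rightarrow> real"
  assumes [measurable]: "\<And>n. p n \<in> borel_measurable M"
    and lim: "AE \<omega> in M. (\<lambda>n. p n \<omega>) \<longlonglongrightarrow> X \<omega>"
    and "t < s" and bound: "\<And>n. measure M {\<omega> \<in> space M. p n \<omega> \<le> s} \<le> c"
  shows "measure M {\<omega> \<in> space M. X \<omega> \<le> t} \<le> c"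
proof -
  define C where "C N = {\<omega> \<in> space M. \<forall>n\<ge>N. p n \<omega> \<le> s}" for N
  have [measurable]: "C N \<in> sets M" for N
    unfolding C_def by measurable
  have "AE \<omega> in M. \<omega> \<in> {\<omega> \<in> space M. X \<omega> \<le> t} \<longrightarrow> \<omega> \<in> (\<Union>N. C N)"
    using lim
  proof eventually_elim
    case (elim \<omega>)
    show ?case
    proof
      assume \<omega>: "\<omega> \<in> {\<omega> \<in> space M. X \<omega> \<le> t}"
      with \<open>t < s\<close> have "\<forall>\<^sub>F n in sequentially. p n \<omega> < s"
        by (intro order_tendstoD(2)[OF elim]) auto
      then obtain N where "\<forall>n\<ge>N. p n \<omega> < s"
        by (auto simp: eventually_sequentially)
      with \<omega> show "\<omega> \<in> (\<Union>N. C N)"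
        by (auto simp: C_def intro!: exI[of _ N] less_imp_le)
    qed
  qed
  then have "emeasure M {\<omega> \<in> space M. X \<omega> \<le> t} \<le> emeasure M (\<Union>N. C N)"
    by (rule emeasure_mono_AE) auto
  also have "\<dots> = (SUP N. emeasure M (C N))"
    by (rule SUP_emeasure_incseq[symmetric]) (auto simp: incseq_def C_def)
  also have "\<dots> \<le> ennreal c"
  proof (rule SUP_least)
    fix N
    have "emeasure M (C N) \<le> emeasure M {\<omega> \<in> space M. p N \<omega> \<le> s}"
      by (rule emeasure_mono) (auto simp: C_def)
    also have "\<dots> \<le> ennreal c"
      using bound[of N] by (simp add: emeasure_eq_measure ennreal_leI)
    finally show "emeasure M (C N) \<le> ennreal c" .
  qed
  finally have "emeasure M {\<omega> \<in> space M. X \<omega> \<le> t} \<le> ennreal c" .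
  moreover have "0 \<le> c"
    using bound[of 0] measure_nonneg[of M "{\<omega> \<in> space M. p 0 \<omega> \<le> s}"] by linarith
  ultimately show ?thesis
    by (simp add: emeasure_eq_measure)
qed

lemma (in prob_space) measure_le_of_AE_tendsto:
  fixes p :: "nat \<Rightarrow> 'a \<Rightarrow> real"
  assumes "\<And>n. p n \<in> borel_measurable M"
    and "AE \<omega> in M. (\<lambda>n. p n \<omega>) \<longlonglongrightarrow> X \<omega>"
    and "\<And>n s. t < s \<Longrightarrow> measure M {\<omega> \<in> space M. p n \<omega> \<le> s} \<le> f s"
    and "continuous (at_right t) f"
  shows "measure M {\<omega> \<in> space M. X \<omega> \<le> t} \<le> f t"
proof (rule tendsto_le[OF trivial_limit_at_right_real])
  show "(f \<longlongrightarrow> f t) (at_right t)"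
    using assms(4) by (simp add: continuous_within)
  show "\<forall>\<^sub>F s in at_right t. measure M {\<omega> \<in> space M. X \<omega> \<le> t} \<le> f s"
    using eventually_at_right_less[of t]
    by eventually_elim (rule measure_le_of_AE_tendsto_less[OF assms(1,2)], auto intro: assms(3))
qed simp

lemma tendsto_infprod_lim:
  fixes f :: "nat \<Rightarrow> real"
  assumes "\<And>i. 0 \<le> f i" and "\<And>i. f i \<le> 1"
  shows "(\<lambda>n. \<Prod>i<n. f i) \<longlonglongrightarrow> infprod_lim f"
proof -
  have "decseq (\<lambda>n. \<Prod>i<n. f i)"
    using assms by (intro decseq_SucI) (simp add: mult_left_le prod_nonneg)
  moreover have "bdd_below (range (\<lambda>n. \<Prod>i<n. f i))"
    using assms by (intro bdd_belowI[of _ 0]) (auto intro: prod_nonneg)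
  ultimately have "convergent (\<lambda>n. \<Prod>i<n. f i)"
    using LIMSEQ_decseq_INF convergent_def by blast
  then show ?thesis
    unfolding infprod_lim_def by (rule convergent_LIMSEQ_iff[THEN iffD1])
qed

lemma (in prob_space) measure_infprod_lim_le:
  fixes E :: "nat \<Rightarrow> 'a \<Rightarrow> real"
  assumes l: "0 < l"
    and indep: "indep_vars (\<lambda>_. borel) E UNIV"
    and dist: "\<And>i. distributed M lborel (E i) (exponential_density l)"
    and a: "0 < a" "a < 1" and t: "0 < t"
  shows "measure M {\<omega> \<in> space M. infprod_lim (\<lambda>i. min (\<Sum>k\<le>i. E k \<omega>) 1) \<le> t}
           \<le> exp (a * l / (1 - a)) * t powr a"
proof (rule measure_le_of_AE_tendsto)
  have [measurable]: "E i \<in> borel_measurable M" for i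
    using distributed_measurable[OF dist] by simp
  show "(\<lambda>\<omega>. \<Prod>i<n. min (\<Sum>k\<le>i. E k \<omega>) 1) \<in> borel_measurable M" for n
    by measurable
  show "AE \<omega> in M. (\<lambda>n. \<Prod>i<n. min (\<Sum>k\<le>i. E k \<omega>) 1) \<longlonglongrightarrow> infprod_lim (\<lambda>i. min (\<Sum>k\<le>i. E k \<omega>) 1)"
    using AE_exponential_pos[of l E, OF l dist]
  proof eventually_elim
    case (elim \<omega>)
    then have "0 \<le> (\<Sum>k\<le>i. E k \<omega>)" for i
      by (intro sum_nonneg) (auto intro: less_imp_le)
    then show ?case
      by (intro tendsto_infprod_lim) auto
  qed
  show "measure M {\<omega> \<in> space M. (\<Prod>i<n. min (\<Sum>k\<le>i. E k \<omega>) 1) \<le> s}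
          \<le> exp (a * l / (1 - a)) * s powr a" if "t < s" for n s
    using measure_partial_prod_le[OF l a indep dist] that t by (simp add: moment_bound_0 a)
  show "continuous (at_right t) (\<lambda>s. exp (a * l / (1 - a)) * s powr a)"
    using t by (intro continuous_intros) auto
qed

lemma exists_exponent_exp_powr_eq:
  fixes l t :: real
  assumes "0 < l" and "0 < t" and "sqrt l < sqrt (- ln t)"
  shows "\<exists>\<alpha>. 0 < \<alpha> \<and> \<alpha> < 1 \<and>
           exp (\<alpha> * l / (1 - \<alpha>)) * t powr \<alpha> = exp (- ((sqrt (- ln t) - sqrt l)\<^sup>2))"
proof -
  define u v where "u = sqrt (- ln t)" and "v = sqrt l"
  have "0 < v" "v < u"
    using assms by (auto simp: u_def v_def)
  have "0 < - ln t"
    using assms(1,3) by simp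
  then have "l = v\<^sup>2" "ln t = - u\<^sup>2"
    using assms(1) by (simp_all add: u_def v_def)
  define \<alpha> where "\<alpha> = 1 - v / u"
  have "0 < \<alpha>" "\<alpha> < 1"
    using \<open>0 < v\<close> \<open>v < u\<close> by (auto simp: \<alpha>_def field_simps)
  moreover have "exp (\<alpha> * l / (1 - \<alpha>)) * t powr \<alpha> = exp (\<alpha> * l / (1 - \<alpha>) + \<alpha> * ln t)"
    using assms by (simp add: powr_def exp_add)
  moreover have "\<alpha> * l / (1 - \<alpha>) + \<alpha> * ln t = - ((u - v)\<^sup>2)"
    using \<open>0 < v\<close> \<open>v < u\<close> unfolding \<alpha>_def \<open>l = v\<^sup>2\<close> \<open>ln t = - u\<^sup>2\<close>
    by (simp add: field_simps power2_eq_square)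
  ultimately show ?thesis
    unfolding u_def v_def by metis
qed

theorem theorem1:
  fixes M :: "'a measure" and E :: "nat \<Rightarrow> 'a \<Rightarrow> real" and l :: real
    and X :: "'a \<Rightarrow> real"
  assumes "prob_space M"
    and "l > 0"
    and "prob_space.indep_vars M (\<lambda>_. borel) E UNIV"
    and "\<And>i. distributed M lborel (E i) (exponential_density l)"
    and "\<And>\<omega>. X \<omega> = infprod_lim (\<lambda>i. min (\<Sum>k\<le>i. E k \<omega>) 1)"
  shows "(\<forall>\<alpha>::real. \<forall>t::real. 0 < \<alpha> \<and> \<alpha> < 1 \<and> 0 < t \<longrightarrow>
            measure M {\<omega> \<in> space M. X \<omega> \<le> t} \<le> exp (\<alpha> * l / (1 - \<alpha>)) * t powr \<alpha>)
       \<and> (\<forall>t::real. 0 < t \<and> t \<le> 1 \<longrightarrow>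
            measure M {\<omega> \<in> space M. X \<omega> \<le> t}
              \<le> exp (- ((max (sqrt (- ln t) - sqrt l) 0)\<^sup>2)))"
proof -
  interpret prob_space M by fact
  have X_eq: "X = (\<lambda>\<omega>. infprod_lim (\<lambda>i. min (\<Sum>k\<le>i. E k \<omega>) 1))"
    using assms(5) by auto
  have power_bound: "measure M {\<omega> \<in> space M. X \<omega> \<le> t} \<le> exp (\<alpha> * l / (1 - \<alpha>)) * t powr \<alpha>"
    if "0 < \<alpha>" "\<alpha> < 1" "0 < t" for \<alpha> t
    unfolding X_eq using assms(2-4) that by (rule measure_infprod_lim_le)
  have "measure M {\<omega> \<in> space M. X \<omega> \<le> t} \<le> exp (- ((max (sqrt (- ln t) - sqrt l) 0)\<^sup>2))"
    if "0 < t" for t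
  proof (cases "sqrt (- ln t) \<le> sqrt l")
    case False
    then obtain \<alpha> where "0 < \<alpha>" "\<alpha> < 1"
      and "exp (\<alpha> * l / (1 - \<alpha>)) * t powr \<alpha> = exp (- ((sqrt (- ln t) - sqrt l)\<^sup>2))"
      using exists_exponent_exp_powr_eq[OF \<open>l > 0\<close> \<open>0 < t\<close>] by auto
    then show ?thesis
      using power_bound[OF \<open>0 < \<alpha>\<close> \<open>\<alpha> < 1\<close> \<open>0 < t\<close>] False by simp
  qed simp
  with power_bound show ?thesis
    by blast
qed

end
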